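(* Let $k,l,m,n$ be positive integers with $k^n\equiv 1\pmod m$ and $l(k-1)\equiv0\pmod m$, let $G=\langle a,b;\ a^m=1,\ b^n=a^l,\ b^{-1}ab=a^k\rangle$, and let $R=\{k^j-1 \bmod m: j\in\mathbb{Z}_n\}$ and $L=\{1-k^j \bmod m: j\in\mathbb{Z}_n\}$. Then (i) $0\in R$ and $0\in L$; and (ii) if $n=\mathrm{ind}_m(k)$, the following are equivalent: (a) the centre of $G$ is trivial; (b) $R$ contains an element invertible in $\mathbb{Z}_m$; (c) $L$ contains an element invertible in $\mathbb{Z}_m$.
   Context: $\mathrm{ind}_m(k)$ is the least positive integer $d$ with $k^d\equiv 1\pmod m$. *)

theory Defs
  imports "HOL-Algebra.Generated_Groups" "HOL-Number_Theory.Cong"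
begin

definition ind :: "nat \<Rightarrow> nat \<Rightarrow> nat" where
  "ind m k = (LEAST d. d > 0 \<and> [k ^ d = 1] (mod m))"

definition mc_rels :: "('g, 'c) monoid_scheme \<Rightarrow> 'g \<Rightarrow> 'g \<Rightarrow> nat \<Rightarrow> nat \<Rightarrow> nat \<Rightarrow> nat \<Rightarrow> bool" where
  "mc_rels H x y k l m n \<longleftrightarrow>
     x \<in> carrier H \<and> y \<in> carrier H \<and>
     x [^]\<^bsub>H\<^esub> m = \<one>\<^bsub>H\<^esub> \<and>
     y [^]\<^bsub>H\<^esub> n = x [^]\<^bsub>H\<^esub> l \<and>
     inv\<^bsub>H\<^esub> y \<otimes>\<^bsub>H\<^esub> x \<otimes>\<^bsub>H\<^esub> y = x [^]\<^bsub>H\<^esub> k"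

text \<open>Test groups H are taken on the
  type nat; this suffices since the subgroup generated by two elements is countable.\<close>
definition presents_mc :: "('g, 'c) monoid_scheme \<Rightarrow> 'g \<Rightarrow> 'g \<Rightarrow> nat \<Rightarrow> nat \<Rightarrow> nat \<Rightarrow> nat \<Rightarrow> bool" where
  "presents_mc G a b k l m n \<longleftrightarrow>
     group G \<and> mc_rels G a b k l m n \<and> carrier G = generate G {a, b} \<and>
     (\<forall>(H :: nat monoid) x y. group H \<and> mc_rels H x y k l m n \<longrightarrow>
        (\<exists>h \<in> hom G H. h a = x \<and> h b = y))"

definition center :: "('g, 'c) monoid_scheme \<Rightarrow> 'g set" where
  "center G = {z \<in> carrier G. \<forall>g \<in> carrier G. z \<otimes>\<^bsub>G\<^esub> g = g \<otimes>\<^bsub>G\<^esub> z}"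

end

theory Submission
  imports Defs "HOL-Library.Nat_Bijection" "HOL-Algebra.Multiplicative_Group"
begin

(* The relations allow every element of G to be written as b^j a^i with j < n, and conjugation
   by b acts on the powers of a as i |-> i k.  A concrete model on pairs (j, i) in Z_n x Z_m,
   read as b^j a^i, satisfies the relations with a of order exactly m, so by the universal
   property a has order m in G as well.  Then a^t is central iff m divides t (k - 1): if
   d = gcd (k - 1) m > 1 then a^(m/d) is a nontrivial central element.  If k - 1 is a unit
   mod m, a central element b^r a^s must have m | s, and b^r commuting with a forces
   k^r = 1 (mod m), hence r = 0 by the minimality of n = ind_m(k).  Finally, some k^j - 1 is
   a unit mod m iff k - 1 is, because k - 1 divides k^j - 1; and L = -R. *)

lemma div_add_carry:
  fixes a b n :: nat
  shows "a div n + (a mod n + b) div n = (a + b) div n"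
proof (cases "n = 0")
  case False
  have "a + b = (a mod n + b) + a div n * n"
    using mod_div_mult_eq[of a n] by linarith
  then have "(a + b) div n = a div n + (a mod n + b) div n"
    using div_mult_self1[OF False] by metis
  then show ?thesis by simp
qed simp

lemma cong_mult_pow_eq_self:
  fixes l k m :: nat
  assumes "[l * k = l] (mod m)"
  shows "[l * k ^ j = l] (mod m)"
proof (induction j)
  case (Suc j)
  have "[l * k ^ Suc j = (l * k ^ j) * k] (mod m)" by (simp add: mult_ac)
  also have "[(l * k ^ j) * k = l * k] (mod m)" using Suc by (rule cong_mult) simp
  finally show ?case using assms by (rule cong_trans)
qed simp

lemma cong_pow_exponent_mod:
  fixes k m n :: nat
  assumes "[k ^ n = 1] (mod m)"
  shows "[k ^ (j mod n) = k ^ j] (mod m)"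
proof -
  have "[k ^ (j mod n) = (k ^ n) ^ (j div n) * k ^ (j mod n)] (mod m)"
    using cong_sym[OF cong_mult[OF cong_pow[OF assms, of "j div n"] cong_refl, of "k ^ (j mod n)"]]
    by simp
  also have "(k ^ n) ^ (j div n) * k ^ (j mod n) = k ^ j"
    by (simp flip: power_mult power_add)
  finally show ?thesis .
qed

lemma cong_mult_eq_self_iff_dvd:
  fixes s k m :: nat
  assumes "0 < k"
  shows "[s * k = s] (mod m) \<longleftrightarrow> m dvd s * (k - 1)"
proof -
  have "s * k = s * (k - 1) + s"
    using assms by (cases k) simp_all
  then show ?thesis
    by (simp add: cong_add_rcancel_0_nat cong_0_iff)
qed

lemma ind_minimal:
  assumes "0 < r" "r < ind m k"
  shows "\<not> [k ^ r = 1] (mod m)"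
  using assms not_less_Least unfolding ind_def by blast

lemma ex_coprime_pow_minus_one_iff:
  fixes k m n :: nat
  assumes "0 < k" "0 < n" and kn: "[k ^ n = 1] (mod m)"
  shows "(\<exists>j<n. coprime (int k ^ j - 1) (int m)) \<longleftrightarrow> coprime (k - 1) m"
proof -
  have int_iff: "coprime (k - 1) m \<longleftrightarrow> coprime (int k - 1) (int m)"
    using \<open>0 < k\<close> coprime_int_iff[of "k - 1" m] by (simp add: of_nat_diff)
  have "coprime (int k - 1) (int m)" if "coprime (int k ^ j - 1) (int m)" for j
  proof -
    have "int k - 1 dvd int k ^ j - 1"
      by (simp add: power_diff_1_eq)
    with that show ?thesis
      using coprime_divisors dvd_refl by blast
  qed
  moreover have "coprime (int k ^ (1 mod n) - 1) (int m)" if "coprime (int k - 1) (int m)"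
  proof -
    have "[int k ^ (1 mod n) = int k] (mod int m)"
      using cong_pow_exponent_mod[OF kn, of 1] by (metis cong_int_iff of_nat_power power_one_right)
    then have "[int k - 1 = int k ^ (1 mod n) - 1] (mod int m)"
      by (rule cong_diff[OF cong_sym cong_refl])
    with that show ?thesis
      by (rule cong_imp_coprime[rotated])
  qed
  ultimately show ?thesis
    using int_iff mod_less_divisor[OF \<open>0 < n\<close>, of 1] by blast
qed

lemma (in group) nat_pow_eq_iff_cong_ord:
  assumes "x \<in> carrier G"
  shows "x [^] (s::nat) = x [^] (t::nat) \<longleftrightarrow> [s = t] (mod ord x)"
  using int_pow_eq[OF assms, of "int s" "int t"]
  by (simp add: int_pow_int cong_iff_dvd_diff dvd_diff_commute flip: cong_int_iff)

lemma (in group) commute_generate: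
  assumes "z \<in> carrier G" "A \<subseteq> carrier G" "\<And>g. g \<in> A \<Longrightarrow> z \<otimes> g = g \<otimes> z"
    and "g \<in> generate G A"
  shows "z \<otimes> g = g \<otimes> z"
  using assms(4)
proof (induction rule: generate.induct)
  case (inv h)
  then have "h \<in> carrier G" "z \<otimes> h = h \<otimes> z"
    using assms by auto
  then show ?case
    using assms(1) by (metis inv_closed inv_solve_left inv_solve_right' m_assoc m_closed)
next
  case (eng h1 h2)
  then have "h1 \<in> carrier G" "h2 \<in> carrier G"
    using generate_in_carrier assms(2) by auto
  with eng.IH show ?case
    using assms(1) by (metis m_assoc)
qed (use assms in auto)

(* The pair (j, i) stands for b^j a^i; the carry term comes from b^n = a^l. *)
fun mc_mult :: "nat \<Rightarrow> nat \<Rightarrow> nat \<Rightarrow> nat \<Rightarrow> nat \<times> nat \<Rightarrow> nat \<times> nat \<Rightarrow> nat \<times> nat" where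
  "mc_mult k l m n (j, i) (j', i') =
     ((j + j') mod n, (i * k ^ j' + i' + l * ((j + j') div n)) mod m)"

lemma mc_mult_assoc:
  fixes k l m n :: nat
  assumes kn: "[k ^ n = 1] (mod m)" and lk: "[l * k = l] (mod m)"
  shows "mc_mult k l m n (mc_mult k l m n p q) r = mc_mult k l m n p (mc_mult k l m n q r)"
proof -
  obtain j1 i1 j2 i2 j3 i3 where pqr: "p = (j1, i1)" "q = (j2, i2)" "r = (j3, i3)"
    by (metis prod.collapse)
  define c12 c23 c12_3 c1_23 where
    "c12 = (j1 + j2) div n" and "c23 = (j2 + j3) div n" and
    "c12_3 = ((j1 + j2) mod n + j3) div n" and "c1_23 = (j1 + (j2 + j3) mod n) div n"
  define T where "T = i1 * k ^ (j2 + j3) + i2 * k ^ j3 + i3 + l * ((j1 + j2 + j3) div n)"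
  have "[(i1 * k ^ j2 + i2 + l * c12) mod m * k ^ j3 + i3 + l * c12_3
         = (i1 * k ^ j2 + i2 + l * c12) * k ^ j3 + i3 + l * c12_3] (mod m)"
    by (intro cong_add) (auto simp: cong_def mod_mult_left_eq)
  also have "(i1 * k ^ j2 + i2 + l * c12) * k ^ j3 + i3 + l * c12_3
         = i1 * k ^ (j2 + j3) + i2 * k ^ j3 + i3 + (l * k ^ j3) * c12 + l * c12_3"
    by (simp add: algebra_simps power_add)
  also have "[i1 * k ^ (j2 + j3) + i2 * k ^ j3 + i3 + (l * k ^ j3) * c12 + l * c12_3
         = i1 * k ^ (j2 + j3) + i2 * k ^ j3 + i3 + l * c12 + l * c12_3] (mod m)"
    using cong_mult_pow_eq_self[OF lk] by (intro cong_add cong_mult) auto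
  also have "i1 * k ^ (j2 + j3) + i2 * k ^ j3 + i3 + l * c12 + l * c12_3 = T"
    unfolding T_def c12_def c12_3_def using div_add_carry[of "j1 + j2" n j3]
    by (simp add: algebra_simps flip: distrib_left)
  finally have left: "[(i1 * k ^ j2 + i2 + l * c12) mod m * k ^ j3 + i3 + l * c12_3 = T] (mod m)" .
  have "[i1 * k ^ ((j2 + j3) mod n) + (i2 * k ^ j3 + i3 + l * c23) mod m + l * c1_23
         = i1 * k ^ (j2 + j3) + (i2 * k ^ j3 + i3 + l * c23) + l * c1_23] (mod m)"
    using cong_pow_exponent_mod[OF kn] by (intro cong_add cong_mult) (auto simp: cong_def)
  also have "i1 * k ^ (j2 + j3) + (i2 * k ^ j3 + i3 + l * c23) + l * c1_23 = T"
    unfolding T_def c23_def c1_23_def using div_add_carry[of "j2 + j3" n j1]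
    by (simp add: algebra_simps flip: distrib_left)
  finally have right:
    "[i1 * k ^ ((j2 + j3) mod n) + (i2 * k ^ j3 + i3 + l * c23) mod m + l * c1_23 = T] (mod m)" .
  have "((j1 + j2) mod n + j3) mod n = (j1 + (j2 + j3) mod n) mod n"
    by (simp add: mod_add_left_eq mod_add_right_eq add.assoc)
  with left right show ?thesis
    unfolding pqr mc_mult.simps cong_def c12_def c23_def c12_3_def c1_23_def by simp
qed

(* k^(n - j) inverts k^j modulo m. *)
lemma mc_mult_left_inverse:
  fixes k l m n :: nat
  assumes kn: "[k ^ n = 1] (mod m)" and "0 < m" "j \<le> n"
  shows "\<exists>i' < m. mc_mult k l m n ((n - j) mod n, i') (j, i) = (0, 0)"
proof -
  define c where "c = ((n - j) mod n + j) div n"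
  define i' where "i' = (m - (i + l * c) mod m) * k ^ (n - j)"
  have "[i' * k ^ j + i + l * c = (m - (i + l * c) mod m) * k ^ n + (i + l * c)] (mod m)"
    using \<open>j \<le> n\<close> by (simp add: i'_def mult.assoc add.assoc flip: power_add)
  also have "[(m - (i + l * c) mod m) * k ^ n + (i + l * c)
              = (m - (i + l * c) mod m) * 1 + (i + l * c)] (mod m)"
    using kn by (intro cong_add cong_mult) auto
  also have "[(m - (i + l * c) mod m) * 1 + (i + l * c) = 0] (mod m)"
  proof -
    have "m - (i + l * c) mod m + (i + l * c) mod m = m"
      using \<open>0 < m\<close> by simp
    then have "(m - (i + l * c) mod m + (i + l * c)) mod m = 0"
      by (metis mod_add_right_eq mod_self)
    then show ?thesis
      by (simp add: cong_def)
  qed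
  finally have "(i' * k ^ j + i + l * c) mod m = 0"
    by (simp add: cong_def)
  moreover have "(i' mod m * k ^ j + (i + l * c)) mod m = (i' * k ^ j + (i + l * c)) mod m"
    by (rule mod_add_cong) (simp_all add: mod_mult_left_eq)
  ultimately have "(i' mod m * k ^ j + i + l * c) mod m = 0"
    by (simp add: add.assoc)
  moreover have "((n - j) mod n + j) mod n = 0"
    using \<open>j \<le> n\<close> by (simp add: mod_add_left_eq)
  ultimately show ?thesis
    unfolding c_def using \<open>0 < m\<close> by (intro exI[of _ "i' mod m"]) simp
qed

lemma mc_mult_in_range:
  "0 < m \<Longrightarrow> 0 < n \<Longrightarrow> mc_mult k l m n p q \<in> {..<n} \<times> {..<m}"
  by (cases p, cases q) simp

lemma mc_mult_commute_a:
  fixes k l m n :: nat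
  assumes "[k ^ j = k] (mod m)" "j < n"
  shows "mc_mult k l m n (0, 1 mod m) (j, i) = mc_mult k l m n (j, i) (0, k mod m)"
proof -
  have "(1 mod m * k ^ j + i) mod m = (k + i) mod m"
  proof (rule mod_add_cong)
    show "(1 mod m * k ^ j) mod m = k mod m"
      using assms(1) by (metis cong_def mod_mult_left_eq mult_1)
  qed (rule refl)
  then show ?thesis
    using assms(2) by (simp add: add.commute mod_add_right_eq)
qed

(* Pairs are encoded as natural numbers because presents_mc tests against groups on nat. *)
definition mc_model :: "nat \<Rightarrow> nat \<Rightarrow> nat \<Rightarrow> nat \<Rightarrow> nat monoid" where
  "mc_model k l m n =
     \<lparr>carrier = prod_encode ` ({..<n} \<times> {..<m}),
      monoid.mult = \<lambda>x y. prod_encode (mc_mult k l m n (prod_decode x) (prod_decode y)),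
      one = prod_encode (0, 0)\<rparr>"

lemma mc_model_group:
  fixes k l m n :: nat
  assumes "0 < m" "0 < n" and kn: "[k ^ n = 1] (mod m)" and lk: "[l * k = l] (mod m)"
  shows "group (mc_model k l m n)"
proof (rule groupI)
  fix x
  assume "x \<in> carrier (mc_model k l m n)"
  then obtain j i where x: "x = prod_encode (j, i)" "j < n" "i < m"
    by (auto simp: mc_model_def)
  then show "\<one>\<^bsub>mc_model k l m n\<^esub> \<otimes>\<^bsub>mc_model k l m n\<^esub> x = x"
    by (simp add: mc_model_def)
  obtain i' where "i' < m" "mc_mult k l m n ((n - j) mod n, i') (j, i) = (0, 0)"
    using mc_mult_left_inverse[OF kn \<open>0 < m\<close> less_imp_le[OF x(2)]] by blast
  then show "\<exists>y \<in> carrier (mc_model k l m n). y \<otimes>\<^bsub>mc_model k l m n\<^esub> x = \<one>\<^bsub>mc_model k l m n\<^esub>"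
    using x assms by (intro bexI[of _ "prod_encode ((n - j) mod n, i')"]) (auto simp: mc_model_def)
qed (use assms mc_mult_in_range[OF assms(1,2)] mc_mult_assoc[OF kn lk] in \<open>auto simp: mc_model_def\<close>)

lemma mc_model_pow_a:
  "prod_encode (0, 1 mod m) [^]\<^bsub>mc_model k l m n\<^esub> t = prod_encode (0, t mod m)"
  by (induction t) (simp_all add: mc_model_def mod_simps)

lemma mc_model_pow_b:
  fixes k l m n :: nat
  assumes lk: "[l * k = l] (mod m)"
  shows "prod_encode (1 mod n, l * (1 div n) mod m) [^]\<^bsub>mc_model k l m n\<^esub> t
           = prod_encode (t mod n, l * (t div n) mod m)"
proof (induction t)
  case (Suc t)
  have "[l * (t div n) mod m * k ^ (1 mod n) + l * (1 div n) mod m + l * ((t mod n + 1 mod n) div n)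
         = l * (t div n) * k ^ (1 mod n) + l * (1 div n) + l * ((t mod n + 1 mod n) div n)] (mod m)"
    by (intro cong_add) (auto simp: cong_def mod_mult_left_eq)
  also have "[l * (t div n) * k ^ (1 mod n) + l * (1 div n) + l * ((t mod n + 1 mod n) div n)
         = l * (t div n) + l * (1 div n) + l * ((t mod n + 1 mod n) div n)] (mod m)"
    using cong_mult[OF cong_mult_pow_eq_self[OF lk] cong_refl, of "1 mod n" "t div n"]
    by (intro cong_add) (simp_all add: mult_ac)
  also have "l * (t div n) + l * (1 div n) + l * ((t mod n + 1 mod n) div n) = l * (Suc t div n)"
    using div_add1_eq[of t 1 n] by (simp only: Suc_eq_plus1 flip: distrib_left)
  finally show ?case
    using Suc by (simp add: mc_model_def cong_def mod_Suc_eq)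
qed (simp add: mc_model_def)

(* The second generator is the reduced form of b: (1, 0) if n > 1, and a^l if n = 1. *)
lemma mc_model_rels:
  fixes k l m n :: nat
  assumes "0 < m" "0 < n" and kn: "[k ^ n = 1] (mod m)" and lk: "[l * k = l] (mod m)"
  shows "mc_rels (mc_model k l m n) (prod_encode (0, 1 mod m))
           (prod_encode (1 mod n, l * (1 div n) mod m)) k l m n"
proof -
  let ?H = "mc_model k l m n" and ?a = "prod_encode (0, 1 mod m)"
    and ?b = "prod_encode (1 mod n, l * (1 div n) mod m)"
  interpret H: group ?H by (rule mc_model_group[OF assms])
  have a: "?a \<in> carrier ?H" and b: "?b \<in> carrier ?H"
    using assms(1,2) by (auto simp: mc_model_def)
  have "?a \<otimes>\<^bsub>?H\<^esub> ?b = ?b \<otimes>\<^bsub>?H\<^esub> prod_encode (0, k mod m)"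
  proof -
    have "[k ^ (1 mod n) = k] (mod m)"
      using cong_pow_exponent_mod[OF kn, of 1] by (simp only: power_one_right)
    from mc_mult_commute_a[OF this mod_less_divisor[OF \<open>0 < n\<close>]]
    show ?thesis
      unfolding mc_model_def by (simp only: monoid.select_convs prod_encode_inverse)
  qed
  then have "?a \<otimes>\<^bsub>?H\<^esub> ?b = ?b \<otimes>\<^bsub>?H\<^esub> ?a [^]\<^bsub>?H\<^esub> k"
    by (simp only: mc_model_pow_a)
  then have "inv\<^bsub>?H\<^esub> ?b \<otimes>\<^bsub>?H\<^esub> ?a \<otimes>\<^bsub>?H\<^esub> ?b = ?a [^]\<^bsub>?H\<^esub> k"
    using a b by (simp add: H.m_assoc H.inv_solve_left')
  moreover have "?b [^]\<^bsub>?H\<^esub> n = ?a [^]\<^bsub>?H\<^esub> l"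
    unfolding mc_model_pow_a mc_model_pow_b[OF lk] using \<open>0 < n\<close> by simp
  moreover have "?a [^]\<^bsub>?H\<^esub> m = \<one>\<^bsub>?H\<^esub>"
    unfolding mc_model_pow_a by (simp add: mc_model_def)
  ultimately show ?thesis
    using a b by (simp add: mc_rels_def)
qed

lemma presents_mc_ord_a:
  fixes k l m n :: nat
  assumes pres: "presents_mc G a b k l m n"
    and "0 < m" "0 < n" "[k ^ n = 1] (mod m)" "[l * k = l] (mod m)"
  shows "group.ord G a = m"
proof -
  let ?H = "mc_model k l m n" and ?x = "prod_encode (0, 1 mod m)"
  interpret G: group G using pres by (simp add: presents_mc_def)
  have a: "a \<in> carrier G" "a [^]\<^bsub>G\<^esub> m = \<one>\<^bsub>G\<^esub>"
    using pres unfolding presents_mc_def mc_rels_def by blast+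
  have H: "group ?H" by (rule mc_model_group[OF assms(2-)])
  obtain h where h: "h \<in> hom G ?H" "h a = ?x"
    using pres H mc_model_rels[OF assms(2-)] unfolding presents_mc_def by blast
  have "a [^]\<^bsub>G\<^esub> t = \<one>\<^bsub>G\<^esub> \<longleftrightarrow> m dvd t" for t
  proof
    assume "a [^]\<^bsub>G\<^esub> t = \<one>\<^bsub>G\<^esub>"
    then have "prod_encode (0, t mod m) = \<one>\<^bsub>?H\<^esub>"
      using hom_nat_pow[OF h(1) a(1) G.group_axioms H] hom_one[OF h(1) G.group_axioms H]
      by (metis h(2) mc_model_pow_a)
    then show "m dvd t"
      by (simp add: mc_model_def mod_eq_0_iff_dvd)
  next
    assume "m dvd t"
    then show "a [^]\<^bsub>G\<^esub> t = \<one>\<^bsub>G\<^esub>"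
      using a by (auto simp: G.nat_pow_pow[symmetric])
  qed
  then show ?thesis
    using G.ord_unique[OF a(1)] by blast
qed

locale mc_group = group G for G (structure) +
  fixes a b :: 'a and k l m n :: nat
  assumes rels: "mc_rels G a b k l m n"
    and generated: "carrier G = generate G {a, b}"
    and m_pos: "0 < m" and n_pos: "0 < n"
begin

lemma a_closed [simp]: "a \<in> carrier G"
  and b_closed [simp]: "b \<in> carrier G"
  and a_pow_m: "a [^] m = \<one>"
  and b_pow_n: "b [^] n = a [^] l"
  and conj_b_a: "inv b \<otimes> a \<otimes> b = a [^] k"
  using rels by (simp_all add: mc_rels_def)

lemma a_pow_mult_b: "a [^] (s::nat) \<otimes> b = b \<otimes> a [^] (s * k)"
proof (induction s)
  case (Suc s)
  have "a \<otimes> b = b \<otimes> a [^] k"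
    using conj_b_a by (simp add: inv_solve_left' m_assoc)
  then have "a [^] Suc s \<otimes> b = (a [^] s \<otimes> b) \<otimes> a [^] k"
    by (simp add: m_assoc)
  also have "\<dots> = b \<otimes> a [^] (Suc s * k)"
    using Suc by (simp add: m_assoc nat_pow_mult add.commute)
  finally show ?case .
qed simp

lemma a_pow_mult_b_pow: "a [^] (s::nat) \<otimes> b [^] (r::nat) = b [^] r \<otimes> a [^] (s * k ^ r)"
proof (induction r arbitrary: s)
  case (Suc r)
  have "a [^] s \<otimes> b [^] Suc r = b [^] r \<otimes> (a [^] (s * k ^ r) \<otimes> b)"
    using Suc by (simp flip: m_assoc)
  also have "\<dots> = b [^] Suc r \<otimes> a [^] (s * k ^ Suc r)"
    by (simp add: a_pow_mult_b m_assoc ac_simps)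
  finally show ?case .
qed simp

lemma b_pow_reduce: "b [^] (j::nat) = b [^] (j mod n) \<otimes> a [^] (l * (j div n))"
proof -
  have "b [^] j = b [^] (j mod n) \<otimes> (b [^] n) [^] (j div n)"
    by (metis b_closed mod_div_mult_eq mult.commute nat_pow_mult nat_pow_pow)
  then show ?thesis
    by (simp add: b_pow_n nat_pow_pow)
qed

lemma inv_a_eq: "inv a = a [^] (m - 1)"
proof -
  have "a [^] (m - 1) \<otimes> a = \<one>"
    using m_pos a_pow_m by (metis Suc_diff_1 nat_pow_Suc)
  then show ?thesis
    by (simp add: inv_equality)
qed

lemma inv_b_eq: "inv b = b [^] (n - 1) \<otimes> a [^] (l * (m - 1))"
proof -
  have "b \<otimes> (b [^] (n - 1) \<otimes> a [^] (l * (m - 1))) = a [^] (l + l * (m - 1))"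
    using n_pos by (simp add: b_pow_n nat_pow_mult flip: m_assoc nat_pow_Suc2)
  also have "\<dots> = \<one>"
    using m_pos nat_pow_pow[OF a_closed, of m l] by (simp add: a_pow_m mult.commute flip: mult_Suc_right)
  finally show ?thesis
    using inv_solve_left[of "b [^] (n - 1) \<otimes> a [^] (l * (m - 1))" b \<one>] by simp
qed

lemma normal_form:
  assumes "g \<in> carrier G"
  obtains j i where "j < n" "g = b [^] j \<otimes> a [^] (i::nat)"
proof -
  define S where "S = {b [^] (j::nat) \<otimes> a [^] (i::nat) | j i. True}"
  have in_S: "b [^] (j::nat) \<otimes> a [^] (i::nat) \<in> S" for j i
    unfolding S_def by blast
  have mult_S: "x \<otimes> y \<in> S" if xy: "x \<in> S" "y \<in> S" for x y
  proof -
    obtain j1 i1 j2 i2 where "x = b [^] (j1::nat) \<otimes> a [^] (i1::nat)" "y = b [^] (j2::nat) \<otimes> a [^] (i2::nat)"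
      using xy unfolding S_def by blast
    then have "x \<otimes> y = b [^] j1 \<otimes> (a [^] i1 \<otimes> b [^] j2) \<otimes> a [^] i2"
      by (simp add: m_assoc)
    also have "\<dots> = (b [^] j1 \<otimes> b [^] j2) \<otimes> (a [^] (i1 * k ^ j2) \<otimes> a [^] i2)"
      by (simp add: a_pow_mult_b_pow m_assoc)
    also have "\<dots> = b [^] (j1 + j2) \<otimes> a [^] (i1 * k ^ j2 + i2)"
      by (simp add: nat_pow_mult)
    finally show ?thesis
      using in_S by simp
  qed
  have S_gens: "a \<in> S" "b \<in> S" "inv a \<in> S" "inv b \<in> S" "\<one> \<in> S"
    using in_S[of 0 1] in_S[of 1 0] in_S[of 0 "m - 1"] in_S[of "n - 1" "l * (m - 1)"] in_S[of 0 0]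
    by (simp_all add: inv_a_eq inv_b_eq)
  have "g \<in> generate G {a, b}"
    using assms generated by simp
  then have "g \<in> S"
    by (induction rule: generate.induct) (use S_gens mult_S in auto)
  then obtain j i where "g = b [^] (j::nat) \<otimes> a [^] (i::nat)"
    unfolding S_def by blast
  then have "g = b [^] (j mod n) \<otimes> a [^] (l * (j div n) + i)"
    using b_pow_reduce[of j] by (simp add: m_assoc nat_pow_mult)
  then show thesis
    using that mod_less_divisor[OF n_pos] by blast
qed

lemma center_if_commutes_with_generators:
  assumes "z \<in> carrier G" "z \<otimes> a = a \<otimes> z" "z \<otimes> b = b \<otimes> z"
  shows "z \<in> center G"
proof -
  have "z \<otimes> g = g \<otimes> z" if "g \<in> carrier G" for g
  proof (rule commute_generate)
    show "g \<in> generate G {a, b}"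
      using that generated by simp
  qed (use assms in auto)
  with assms(1) show ?thesis
    unfolding center_def by blast
qed

lemma center_nontrivial:
  assumes ord_a: "ord a = m" and "0 < k" and "\<not> coprime (k - 1) m"
  shows "center G \<noteq> {\<one>}"
proof -
  define d where "d = gcd (k - 1) m"
  define t where "t = m div d"
  have "1 < d" "d dvd m" "d dvd k - 1"
    using assms(3) m_pos unfolding d_def by (auto simp: coprime_iff_gcd_eq_1 Suc_lessI)
  then have "0 < t" "t < m"
    using m_pos unfolding t_def by (auto simp: dvd_div_eq_0_iff)
  have "t * (k - 1) = m * ((k - 1) div d)"
    using \<open>d dvd m\<close> \<open>d dvd k - 1\<close> unfolding t_def by (auto elim!: dvdE)
  then have "[t * k = t] (mod ord a)"
    using cong_mult_eq_self_iff_dvd[OF \<open>0 < k\<close>] ord_a by simp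
  then have "a [^] t \<otimes> b = b \<otimes> a [^] t"
    using nat_pow_eq_iff_cong_ord[OF a_closed] by (simp add: a_pow_mult_b)
  moreover have "a [^] t \<otimes> a = a \<otimes> a [^] t"
    by (simp add: nat_pow_Suc2[symmetric])
  ultimately have "a [^] t \<in> center G"
    by (simp add: center_if_commutes_with_generators)
  moreover have "a [^] t \<noteq> \<one>"
    using pow_eq_id[OF a_closed] ord_a \<open>0 < t\<close> \<open>t < m\<close> by (auto dest: nat_dvd_not_less)
  ultimately show ?thesis
    by blast
qed

lemma center_trivial:
  assumes ord_a: "ord a = m" and "0 < k" and "coprime (k - 1) m" and n_ind: "n = ind m k"
  shows "center G = {\<one>}"
proof -
  have "z = \<one>" if z: "z \<in> center G" for z
  proof -
    obtain r s where "r < n" and z_nf: "z = b [^] r \<otimes> a [^] (s::nat)"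
      using normal_form z unfolding center_def by blast
    have "b [^] Suc r \<otimes> a [^] (s * k) = z \<otimes> b"
      by (simp add: z_nf m_assoc a_pow_mult_b)
    also have "\<dots> = b \<otimes> z"
      using z unfolding center_def by simp
    also have "\<dots> = b [^] Suc r \<otimes> a [^] s"
      unfolding z_nf nat_pow_Suc2[OF b_closed] by (simp add: m_assoc)
    finally have "[s * k = s] (mod m)"
      using nat_pow_eq_iff_cong_ord[OF a_closed] ord_a by simp
    then have "m dvd s"
      using cong_mult_eq_self_iff_dvd[OF \<open>0 < k\<close>] \<open>coprime (k - 1) m\<close>
      by (simp add: coprime_commute coprime_dvd_mult_left_iff)
    then have z_b_pow: "z = b [^] r"
      using pow_eq_id[OF a_closed] ord_a z_nf by simp
    have "b [^] r \<otimes> a [^] (k ^ r) = a \<otimes> z"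
      using a_pow_mult_b_pow[of 1 r] by (simp add: z_b_pow)
    also have "\<dots> = z \<otimes> a"
      using z unfolding center_def by simp
    also have "\<dots> = b [^] r \<otimes> a [^] (1::nat)"
      by (simp add: z_b_pow)
    finally have "[k ^ r = 1] (mod m)"
      using nat_pow_eq_iff_cong_ord[OF a_closed, of "k ^ r" 1] ord_a by simp
    then have "r = 0"
      using ind_minimal \<open>r < n\<close> n_ind by blast
    then show ?thesis
      by (simp add: z_b_pow)
  qed
  then show ?thesis
    unfolding center_def by auto
qed

end

theorem lemma2p4:
  fixes k l m n :: nat and G :: "('g, 'c) monoid_scheme" and a b :: 'g
  assumes "k > 0" "l > 0" "m > 0" "n > 0"
    and "[k ^ n = 1] (mod m)"
    and "[l * (k - 1) = 0] (mod m)"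
    and "presents_mc G a b k l m n"
  defines "R \<equiv> {(int k ^ j - 1) mod int m | j. j < n}"
    and "L \<equiv> {(1 - int k ^ j) mod int m | j. j < n}"
  shows "(0 \<in> R \<and> 0 \<in> L) \<and>
         (n = ind m k \<longrightarrow>
           ((center G = {\<one>\<^bsub>G\<^esub>} \<longleftrightarrow> (\<exists>r \<in> R. coprime r (int m))) \<and>
            ((\<exists>r \<in> R. coprime r (int m)) \<longleftrightarrow> (\<exists>r \<in> L. coprime r (int m)))))"
proof -
  have "group G" "mc_rels G a b k l m n" "carrier G = generate G {a, b}"
    using assms(7) unfolding presents_mc_def by blast+
  then interpret mc_group G a b k l m n
    using assms(3,4) by (simp add: mc_group_def mc_group_axioms_def)
  have "[l * k = l] (mod m)"
    using assms(6) cong_mult_eq_self_iff_dvd[OF \<open>k > 0\<close>] by (simp add: cong_0_iff)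
  then have ord_a: "ord a = m"
    by (rule presents_mc_ord_a[OF assms(7,3,4,5)])
  have "0 \<in> R" "0 \<in> L"
    unfolding R_def L_def using \<open>n > 0\<close> by (auto intro!: exI[of _ 0])
  moreover have "(\<exists>r \<in> R. coprime r (int m)) \<longleftrightarrow> coprime (k - 1) m"
    unfolding R_def using ex_coprime_pow_minus_one_iff[OF assms(1,4,5)] \<open>m > 0\<close> by auto
  moreover have "(\<exists>r \<in> L. coprime r (int m)) \<longleftrightarrow> coprime (k - 1) m"
  proof -
    have "coprime (1 - int k ^ j) (int m) \<longleftrightarrow> coprime (int k ^ j - 1) (int m)" for j
      using coprime_minus_left_iff[of "int k ^ j - 1" "int m"] by simp
    then show ?thesis
      unfolding L_def using ex_coprime_pow_minus_one_iff[OF assms(1,4,5)] \<open>m > 0\<close> by auto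
  qed
  moreover have "center G = {\<one>\<^bsub>G\<^esub>} \<longleftrightarrow> coprime (k - 1) m" if "n = ind m k"
    using center_trivial[OF ord_a \<open>k > 0\<close> _ that] center_nontrivial[OF ord_a \<open>k > 0\<close>] by blast
  ultimately show ?thesis
    by blast
qed

end
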